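(* Let $(\mathbf q^\theta)_{\theta>0}$ be a family of information structures and $V^+=\limsup_{\theta\to0}\frac1\theta\mathrm{VoI}_A(\mathbf q^\theta)$. Assume that either (a) $\mathbb E\big[d(\mathbf q^\theta,\Delta^c_A(p_0))\big]=o(\theta)$ as $\theta\to0$, or (b) $\partial A$ is a $C^2$ submanifold of dimension $|K|-1$, the agent is flexible at $p_0$ (e.g. $v_A$ is twice differentiable at $p_0$ with positive definite Hessian), and $\mathbb E\|\mathbf q^\theta-p_0\|^2=o(\theta)$. Then $V^+=0$.
   Context: Let $K$ be finite, signed measures identified with $\mathbb R^K$, $\langle s,v\rangle=\sum_k s_kv_k$, Euclidean norm. $\Delta$ is the simplex of probabilities on $K$; $p_0\in\Delta$ has full support. $A\subset\mathbb R^K$ is a nonempty compact convex action set, $v_A(p)=\max_{a\in A}\langle p,a\rangle$, $A^\star(p)=\arg\max_{a\in A}\langle p,a\rangle$. For $a\in A$, $\Delta^\star_A(a)=\{p\in\Delta:\langle p,a'\rangle\le\langle p,a\rangle\ \forall a'\in A\}$; the confidence set is $\Delta^c_A(p_0)=\bigcap_{a\in A^\star(p_0)}\Delta^\star_A(a)$ and $d(q,\Delta^c_A(p_0))=\inf_{p\in\Delta^c_A(p_0)}\|p-q\|$. The agent is flexible at $p_0$ if (equivalently under the $C^2$ assumption) $A^\star(p_0)=\{a^\sharp\}$ with all principal curvatures of $\partial A$ at $a^\sharp$ positive, or $v_A$ is twice differentiable at $p_0$ (along $\Delta$) with positive definite Hessian. An information structure is a $\Delta$-valued random variable $\mathbf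 q$ with $\mathbb E[\mathbf q]=p_0$, and $\mathrm{VoI}_A(\mathbf q)=\mathbb E[v_A(\mathbf q)]-v_A(p_0)$. *)

theory Defs
  imports "HOL-Probability.Probability" "HOL-Library.Landau_Symbols"
begin

definition prob_simplex :: "(real^'k::finite) set" where
  "prob_simplex = {p. (\<forall>k. 0 \<le> p $ k) \<and> sum (\<lambda>k. p $ k) UNIV = 1}"

definition valfun :: "(real^'k::finite) set \<Rightarrow> real^'k \<Rightarrow> real" where
  "valfun A p = (SUP a\<in>A. p \<bullet> a)"

definition optact :: "(real^'k::finite) set \<Rightarrow> real^'k \<Rightarrow> (real^'k) set" where
  "optact A p = {a \<in> A. \<forall>a'\<in>A. p \<bullet> a' \<le> p \<bullet> a}"

definition optbeliefs :: "(real^'k::finite) set \<Rightarrow> real^'k \<Rightarrow> (real^'k) set" where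
  "optbeliefs A a = {p \<in> prob_simplex. \<forall>a'\<in>A. p \<bullet> a' \<le> p \<bullet> a}"

definition confset :: "(real^'k::finite) set \<Rightarrow> real^'k \<Rightarrow> (real^'k) set" where
  "confset A p0 = (\<Inter>a\<in>optact A p0. optbeliefs A a)"

text \<open>The boundary of A is a C^2 embedded submanifold of dimension |K|-1
  (a C^2 hypersurface): locally the regular zero set of a C^2 function.\<close>
definition C2_hypersurface :: "(real^'k::finite) set \<Rightarrow> bool" where
  "C2_hypersurface S \<longleftrightarrow>
     (\<forall>x\<in>S. \<exists>U g grad Hess. open U \<and> x \<in> U \<and>
        (\<forall>y\<in>U. (g has_derivative (\<lambda>h. grad y \<bullet> h)) (at y)) \<and>
        (\<forall>y\<in>U. (grad has_derivative (\<lambda>h. Hess y *v h)) (at y)) \<and>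
        continuous_on U (Hess :: real^'k \<Rightarrow> real^'k^'k) \<and>
        grad x \<noteq> 0 \<and>
        S \<inter> U = {y\<in>U. (g :: real^'k \<Rightarrow> real) y = 0})"

definition flexible :: "(real^'k::finite) set \<Rightarrow> real^'k \<Rightarrow> bool" where
  "flexible A p0 \<longleftrightarrow>
     (\<exists>G (H :: real^'k^'k).
        (\<forall>\<^sub>F p in at p0 within prob_simplex.
            (valfun A has_derivative (\<lambda>h. G p \<bullet> h)) (at p within prob_simplex)) \<and>
        (valfun A has_derivative (\<lambda>h. G p0 \<bullet> h)) (at p0 within prob_simplex) \<and>
        (G has_derivative (\<lambda>h. H *v h)) (at p0 within prob_simplex) \<and>
        (\<forall>h. sum (\<lambda>k. h $ k) UNIV = 0 \<and> h \<noteq> 0 \<longrightarrow> 0 < h \<bullet> (H *v h)))"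

end

theory Submission
  imports Defs
begin

text \<open>Since E[q] = p0, averaging kills every affine function of q - p0. Jensen's
  inequality for the convex function v_A gives VoI >= 0. Conversely, v_A lies below an
  affine function plus an error term on the simplex: for an optimal action a at p0,
  v_A(p) <= <p, a> + 2R d(p, Delta^c_A(p0)), because v_A is R-Lipschitz and equals <., a>
  on the confidence set; under flexibility, the mean value theorem bounds the first-order
  Taylor remainder of v_A at p0 by C |p - p0|^2. Taking expectations gives
  0 <= VoI(q^theta) <= C E[error] = o(theta).\<close>

lemma norm_le_1_if_prob_simplex:
  assumes "p \<in> prob_simplex"
  shows "norm (p :: real^'k::finite) \<le> 1"
proof -
  have "norm p \<le> (\<Sum>k\<in>UNIV. \<bar>p $ k\<bar>)" by (rule norm_le_l1_cart)
  also have "\<dots> = 1" using assms by (simp add: prob_simplex_def)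
  finally show ?thesis .
qed

lemma compact_prob_simplex: "compact (prob_simplex :: (real^'k::finite) set)"
  unfolding compact_eq_bounded_closed
proof
  show "bounded (prob_simplex :: (real^'k) set)"
    using norm_le_1_if_prob_simplex by (auto simp: bounded_iff)
  have "prob_simplex = (\<Inter>k. {p::real^'k. p $ k \<ge> 0}) \<inter> {p. (\<Sum>k\<in>UNIV. p $ k) = 1}"
    by (auto simp: prob_simplex_def)
  moreover have "closed {p::real^'k. (\<Sum>k\<in>UNIV. p $ k) = 1}"
    by (intro closed_Collect_eq continuous_on_sum continuous_on_const linear_continuous_on) auto
  ultimately show "closed (prob_simplex :: (real^'k) set)"
    by (metis closed_INT closed_Int closed_halfspace_component_ge_cart)
qed

lemma convex_prob_simplex: "convex (prob_simplex :: (real^'k::finite) set)"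
  unfolding convex_def prob_simplex_def
  by (auto simp: sum.distrib sum_distrib_left[symmetric])

lemma inner_le_mult_norm:
  fixes x a :: "'a::real_inner"
  assumes "norm a \<le> R"
  shows "x \<bullet> a \<le> R * norm x"
proof -
  have "x \<bullet> a \<le> norm x * norm a" by (rule norm_cauchy_schwarz)
  also have "\<dots> \<le> norm x * R" using assms by (simp add: mult_left_mono)
  finally show ?thesis by (simp add: mult.commute)
qed

lemma inner_le_valfun:
  assumes "bounded A" "a \<in> A"
  shows "p \<bullet> a \<le> valfun A p"
  unfolding valfun_def
proof (rule cSUP_upper[OF assms(2)])
  obtain R where R: "\<forall>a\<in>A. norm a \<le> R" using assms(1) bounded_iff by blast
  then have "p \<bullet> a \<le> R * norm p" if "a \<in> A" for a
    using that by (simp add: inner_le_mult_norm)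
  then show "bdd_above ((\<lambda>a. p \<bullet> a) ` A)" by (intro bdd_aboveI2)
qed

lemma valfun_le_inner:
  assumes "a \<in> A" "\<forall>a'\<in>A. p \<bullet> a' \<le> p \<bullet> a"
  shows "valfun A p \<le> p \<bullet> a"
  unfolding valfun_def using assms by (intro cSUP_least) auto

lemma valfun_eq_inner_if_optact:
  assumes "bounded A" "a \<in> optact A p"
  shows "valfun A p = p \<bullet> a"
  using assms inner_le_valfun[OF assms(1)] valfun_le_inner
  by (intro antisym) (auto simp: optact_def)

lemma optact_nonempty:
  assumes "compact A" "A \<noteq> {}"
  shows "optact A p \<noteq> {}"
proof -
  have "continuous_on A (\<lambda>a. p \<bullet> a)" by (intro continuous_intros)
  then show ?thesis
    using continuous_attains_sup[OF assms] by (auto simp: optact_def)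
qed

lemma valfun_le_add_norm_diff:
  assumes "A \<noteq> {}" "\<forall>a\<in>A. norm a \<le> R"
  shows "valfun A p \<le> valfun A p' + R * norm (p - p')"
  unfolding valfun_def
proof (rule cSUP_least[OF assms(1)])
  fix a assume a: "a \<in> A"
  have "(p - p') \<bullet> a \<le> R * norm (p - p')"
    using assms(2) a by (simp add: inner_le_mult_norm)
  moreover have "p' \<bullet> a \<le> valfun A p'"
    using assms(2) a by (intro inner_le_valfun) (auto simp: bounded_iff)
  ultimately show "p \<bullet> a \<le> (SUP a\<in>A. p' \<bullet> a) + R * norm (p - p')"
    by (simp add: valfun_def inner_diff_left)
qed

lemma continuous_on_valfun:
  assumes "bounded A" "A \<noteq> {}"
  shows "continuous_on S (valfun A)"
proof -
  obtain R where R: "\<forall>a\<in>A. norm a \<le> R" using assms(1) bounded_iff by blast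
  then have "0 \<le> R" using assms(2) norm_ge_zero order_trans by blast
  have "dist (valfun A x) (valfun A y) \<le> R * dist x y" for x y
    using valfun_le_add_norm_diff[OF assms(2) R, of x y] valfun_le_add_norm_diff[OF assms(2) R, of y x]
    by (simp add: dist_norm dist_real_def abs_le_iff norm_minus_commute)
  then have "R-lipschitz_on UNIV (valfun A)"
    using \<open>0 \<le> R\<close> by (intro lipschitz_onI)
  then show ?thesis
    using lipschitz_on_continuous_on continuous_on_subset by blast
qed

lemma valfun_minus_inner_le_infdist_confset:
  assumes R: "\<forall>a\<in>A. norm a \<le> R" "0 < R" and a: "a \<in> optact A p0" and p0: "p0 \<in> prob_simplex"
  shows "valfun A x - x \<bullet> a \<le> 2 * R * infdist x (confset A p0)"
proof -
  let ?CS = "confset A p0"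
  have "A \<noteq> {}" using a by (auto simp: optact_def)
  have "p0 \<in> ?CS" using p0 by (auto simp: confset_def optbeliefs_def optact_def)
  then have CS: "?CS \<noteq> {}" by blast
  have "(valfun A x - x \<bullet> a) / (2 * R) \<le> infdist x ?CS"
    unfolding infdist_notempty[OF CS]
  proof (rule cINF_greatest[OF CS])
    fix p assume "p \<in> ?CS"
    then have "valfun A p \<le> p \<bullet> a"
      using a by (intro valfun_le_inner) (auto simp: confset_def optbeliefs_def optact_def)
    moreover have "valfun A x \<le> valfun A p + R * norm (x - p)"
      by (rule valfun_le_add_norm_diff[OF \<open>A \<noteq> {}\<close> R(1)])
    moreover have "(p - x) \<bullet> a \<le> R * norm (p - x)"
      using R(1) a by (simp add: inner_le_mult_norm optact_def)
    ultimately have "valfun A x - x \<bullet> a \<le> 2 * R * dist x p"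
      by (simp add: inner_diff_left dist_norm norm_minus_commute algebra_simps)
    then show "(valfun A x - x \<bullet> a) / (2 * R) \<le> dist x p"
      using R(2) by (simp add: divide_le_eq mult.commute)
  qed
  then show ?thesis using R(2) by (simp add: divide_le_eq mult.commute)
qed

lemma has_derivative_imp_Lipschitz_at:
  fixes G :: "'a::real_normed_vector \<Rightarrow> 'b::real_normed_vector"
  assumes "(G has_derivative G') (at x within S)"
  obtains \<delta> L where "0 < \<delta>"
    "\<And>y. y \<in> S \<Longrightarrow> norm (y - x) < \<delta> \<Longrightarrow> norm (G y - G x) \<le> L * norm (y - x)"
proof -
  obtain \<delta> where "0 < \<delta>" and
    \<delta>: "\<forall>y\<in>S. norm (y - x) < \<delta> \<longrightarrow> norm (G y - G x - G' (y - x)) \<le> 1 * norm (y - x)"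
    using assms zero_less_one unfolding has_derivative_within_alt by blast
  obtain K where K: "\<And>h. norm (G' h) \<le> norm h * K"
    using bounded_linear.pos_bounded[OF has_derivative_bounded_linear[OF assms]] by blast
  have "norm (G y - G x) \<le> (1 + K) * norm (y - x)" if "y \<in> S" "norm (y - x) < \<delta>" for y
  proof -
    have "norm (G y - G x) \<le> norm (G y - G x - G' (y - x)) + norm (G' (y - x))"
      using norm_triangle_ineq[of "G y - G x - G' (y - x)" "G' (y - x)"] by simp
    then have "norm (G y - G x) \<le> norm (y - x) + norm (y - x) * K"
      using \<delta> that K[of "y - x"] by fastforce
    then show ?thesis by (simp add: algebra_simps)
  qed
  with \<open>0 < \<delta>\<close> show thesis by (rule that)
qed

lemma has_derivative_along_segment:
  fixes f :: "'a::real_normed_vector \<Rightarrow> real"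
  assumes df: "(f has_derivative f') (at (x + t *\<^sub>R v) within S)"
    and seg: "\<And>s. s \<in> {0..1} \<Longrightarrow> x + s *\<^sub>R v \<in> S" and t: "0 < t" "t < 1"
  shows "((\<lambda>s. f (x + s *\<^sub>R v)) has_derivative (\<lambda>s. f' (s *\<^sub>R v))) (at t)"
proof -
  define \<gamma> where "\<gamma> s = x + s *\<^sub>R v" for s :: real
  have "(f has_derivative f') (at (\<gamma> t) within \<gamma> ` {0..1})"
    unfolding \<gamma>_def by (rule has_derivative_subset[OF df]) (use seg in auto)
  moreover have "(\<gamma> has_derivative (\<lambda>s. s *\<^sub>R v)) (at t within {0..1})"
    unfolding \<gamma>_def by (rule derivative_eq_intros | simp)+
  ultimately have "((f \<circ> \<gamma>) has_derivative (f' \<circ> (\<lambda>s. s *\<^sub>R v))) (at t within {0..1})"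
    by (intro diff_chain_within)
  then show ?thesis
    using at_within_Icc_at[OF t] by (simp add: \<gamma>_def o_def)
qed

lemma first_order_remainder_le:
  fixes f :: "'a::real_inner \<Rightarrow> real" and G :: "'a \<Rightarrow> 'a"
  assumes S: "convex S" "x \<in> S" "p \<in> S" and f: "continuous_on S f"
    and df: "\<And>y. y \<in> S \<Longrightarrow> y \<noteq> x \<Longrightarrow> norm (y - x) < r \<Longrightarrow>
               (f has_derivative (\<lambda>h. G y \<bullet> h)) (at y within S)"
    and dG: "\<And>y. y \<in> S \<Longrightarrow> norm (y - x) < r \<Longrightarrow> norm (G y - G x) \<le> L * norm (y - x)"
    and p: "norm (p - x) < r"
  shows "f p - f x - G x \<bullet> (p - x) \<le> L * (norm (p - x))\<^sup>2"
proof (cases "p = x")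
  case False
  define n where "n = norm (p - x)"
  then have "0 < n" using False by simp
  define \<gamma> where "\<gamma> t = x + t *\<^sub>R (p - x)" for t :: real
  define \<psi> where "\<psi> t = f (\<gamma> t) - t * (G x \<bullet> (p - x))" for t
  have \<gamma>_S: "\<gamma> t \<in> S" if "t \<in> {0..1}" for t
    using convexD[OF S(1,2,3), of "1 - t" t] that by (simp add: \<gamma>_def algebra_simps)
  have \<gamma>_dist: "norm (\<gamma> t - x) = t * n" if "0 \<le> t" for t
    using that by (simp add: \<gamma>_def n_def)
  have cont: "continuous_on {0..1} \<psi>"
    unfolding \<psi>_def using \<gamma>_S
    by (intro continuous_intros continuous_on_compose2[OF f]) (auto simp: \<gamma>_def intro!: continuous_intros)
  have der: "(\<psi> has_derivative (\<lambda>s. s * ((G (\<gamma> t) - G x) \<bullet> (p - x)))) (at t)"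
    if t: "0 < t" "t < 1" for t
  proof -
    have "norm (\<gamma> t - x) = t * n" "t * n < n" using \<gamma>_dist t \<open>0 < n\<close> by auto
    then have "\<gamma> t \<noteq> x" "norm (\<gamma> t - x) < r"
      using t \<open>0 < n\<close> p unfolding n_def by (auto, linarith)
    then have "(f has_derivative (\<lambda>h. G (\<gamma> t) \<bullet> h)) (at (\<gamma> t) within S)"
      using t \<gamma>_S by (intro df) auto
    from this[unfolded \<gamma>_def]
    have "((\<lambda>s. f (\<gamma> s)) has_derivative (\<lambda>s. G (\<gamma> t) \<bullet> (s *\<^sub>R (p - x)))) (at t)"
      unfolding \<gamma>_def by (rule has_derivative_along_segment) (use \<gamma>_S t in \<open>auto simp: \<gamma>_def\<close>)
    then have "(\<psi> has_derivative (\<lambda>s. G (\<gamma> t) \<bullet> (s *\<^sub>R (p - x)) - s * (G x \<bullet> (p - x)))) (at t)"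
      unfolding \<psi>_def
      by (intro has_derivative_diff bounded_linear_imp_has_derivative bounded_linear_mult_left)
    then show ?thesis by (simp add: inner_diff_left right_diff_distrib)
  qed
  obtain t where t: "t \<in> {0<..<1}"
    "norm (\<psi> 1 - \<psi> 0) \<le> norm ((1 - 0) * ((G (\<gamma> t) - G x) \<bullet> (p - x)))"
    using mvt_general[OF zero_less_one cont der] by blast
  have "t * n < 1 * n" using t \<open>0 < n\<close> by (intro mult_strict_right_mono) auto
  then have "t * n < r" using p unfolding n_def by linarith
  then have "norm (\<gamma> t - x) < r" using \<gamma>_dist[of t] t by simp
  then have Gt: "norm (G (\<gamma> t) - G x) \<le> L * (t * n)"
    using dG[of "\<gamma> t"] \<gamma>_S[of t] \<gamma>_dist[of t] t by simp
  have "f p - f x - G x \<bullet> (p - x) = \<psi> 1 - \<psi> 0"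
    by (simp add: \<psi>_def \<gamma>_def)
  also have "\<dots> \<le> \<bar>(G (\<gamma> t) - G x) \<bullet> (p - x)\<bar>"
    using t(2) by auto
  also have "\<dots> \<le> norm (G (\<gamma> t) - G x) * n"
    unfolding n_def by (rule Cauchy_Schwarz_ineq2)
  also have "\<dots> \<le> L * (t * n) * n"
    using Gt \<open>0 < n\<close> by (intro mult_right_mono) auto
  also have "\<dots> \<le> L * n * n"
  proof -
    have "0 \<le> L * (t * n)" using Gt norm_ge_zero order_trans by blast
    moreover have "0 < t * n" using t \<open>0 < n\<close> by simp
    ultimately have "0 \<le> L" by (simp add: zero_le_mult_iff)
    moreover have "t * n \<le> n" using t \<open>0 < n\<close> by simp
    ultimately show ?thesis using \<open>0 < n\<close> by (intro mult_right_mono mult_left_mono) auto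
  qed
  finally show ?thesis by (simp add: n_def power2_eq_square)
qed simp

lemma affine_remainder_le_far:
  fixes f :: "'a::real_inner \<Rightarrow> real"
  assumes "0 < \<delta>" "\<delta> \<le> norm (p - x)" "0 \<le> R" "f p - f x \<le> R * norm (p - x)"
  shows "f p - f x - g \<bullet> (p - x) \<le> (R + norm g) / \<delta> * (norm (p - x))\<^sup>2"
proof -
  define n where "n = norm (p - x)"
  have "f p - f x - g \<bullet> (p - x) \<le> R * n + norm g * n"
    using assms(4) Cauchy_Schwarz_ineq2[of g "p - x"] by (simp add: n_def)
  also have "\<dots> = (R + norm g) / \<delta> * (\<delta> * n)"
    using assms(1) by (simp add: field_simps)
  also have "\<dots> \<le> (R + norm g) / \<delta> * (n * n)"
    using assms by (intro mult_left_mono mult_right_mono) (auto simp: n_def)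
  finally show ?thesis by (simp add: n_def power2_eq_square)
qed

lemma flexible_imp_second_order_upper_bound:
  assumes flex: "flexible A p0" and A: "compact A" "A \<noteq> {}" and p0: "p0 \<in> prob_simplex"
  obtains g C where
    "\<forall>p\<in>prob_simplex. valfun A p - valfun A p0 - g \<bullet> (p - p0) \<le> C * (norm (p - p0))\<^sup>2"
proof -
  obtain R where R: "\<forall>a\<in>A. norm a \<le> R" "0 < R"
    using compact_imp_bounded[OF A(1)] bounded_pos by blast
  obtain G H where
    dv: "\<forall>\<^sub>F p in at p0 within prob_simplex.
           (valfun A has_derivative (\<lambda>h. G p \<bullet> h)) (at p within prob_simplex)"
    and dG: "(G has_derivative (\<lambda>h. H *v h)) (at p0 within prob_simplex)"
    using flex unfolding flexible_def by blast
  obtain \<delta>\<^sub>1 where "0 < \<delta>\<^sub>1" and \<delta>\<^sub>1: "\<forall>p\<in>prob_simplex. p \<noteq> p0 \<and> dist p p0 < \<delta>\<^sub>1 \<longrightarrow>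
      (valfun A has_derivative (\<lambda>h. G p \<bullet> h)) (at p within prob_simplex)"
    using dv unfolding eventually_at by blast
  obtain \<delta>\<^sub>2 L where "0 < \<delta>\<^sub>2" and \<delta>\<^sub>2: "\<And>p. p \<in> prob_simplex \<Longrightarrow> norm (p - p0) < \<delta>\<^sub>2 \<Longrightarrow>
      norm (G p - G p0) \<le> L * norm (p - p0)"
    using has_derivative_imp_Lipschitz_at[OF dG] by blast
  define \<delta> where "\<delta> = min \<delta>\<^sub>1 \<delta>\<^sub>2"
  define C where "C = max L ((R + norm (G p0)) / \<delta>)"
  have "valfun A p - valfun A p0 - G p0 \<bullet> (p - p0) \<le> C * (norm (p - p0))\<^sup>2"
    if p: "p \<in> prob_simplex" for p
  proof (cases "norm (p - p0) < \<delta>")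
    case True
    have "valfun A p - valfun A p0 - G p0 \<bullet> (p - p0) \<le> L * (norm (p - p0))\<^sup>2"
      using convex_prob_simplex p0 p continuous_on_valfun[OF compact_imp_bounded[OF A(1)] A(2)]
        \<delta>\<^sub>1 \<delta>\<^sub>2 True
      by (intro first_order_remainder_le[where r = \<delta>]) (auto simp: \<delta>_def dist_norm)
    moreover have "L * (norm (p - p0))\<^sup>2 \<le> C * (norm (p - p0))\<^sup>2"
      by (intro mult_right_mono) (auto simp: C_def)
    ultimately show ?thesis by linarith
  next
    case False
    have "valfun A p - valfun A p0 - G p0 \<bullet> (p - p0)
        \<le> (R + norm (G p0)) / \<delta> * (norm (p - p0))\<^sup>2"
      using False \<open>0 < \<delta>\<^sub>1\<close> \<open>0 < \<delta>\<^sub>2\<close> R valfun_le_add_norm_diff[OF A(2) R(1), of p p0]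
      by (intro affine_remainder_le_far) (auto simp: \<delta>_def)
    moreover have "(R + norm (G p0)) / \<delta> * (norm (p - p0))\<^sup>2 \<le> C * (norm (p - p0))\<^sup>2"
      by (intro mult_right_mono) (auto simp: C_def)
    ultimately show ?thesis by linarith
  qed
  then show thesis by (rule that[rule_format])
qed

context prob_space
begin

lemma integrable_continuous_comp_prob_simplex:
  fixes Q :: "'a \<Rightarrow> real^'k::finite" and f :: "real^'k \<Rightarrow> 'b::{banach,second_countable_topology}"
  assumes Q: "Q \<in> borel_measurable M" "\<And>\<omega>. \<omega> \<in> space M \<Longrightarrow> Q \<omega> \<in> prob_simplex"
    and f: "continuous_on UNIV f"
  shows "integrable M (\<lambda>\<omega>. f (Q \<omega>))"
proof -
  have "bounded (f ` prob_simplex)"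
    using compact_continuous_image[OF continuous_on_subset[OF f] compact_prob_simplex]
    by (auto dest: compact_imp_bounded)
  then obtain B where "\<forall>p\<in>prob_simplex. norm (f p) \<le> B" by (auto simp: bounded_iff)
  then show ?thesis
    using Q measurable_compose[OF Q(1) borel_measurable_continuous_onI[OF f]]
    by (intro integrable_const_bound[OF AE_I2]) auto
qed

lemma integrable_prob_simplex_valued:
  fixes Q :: "'a \<Rightarrow> real^'k::finite"
  assumes "Q \<in> borel_measurable M" "\<And>\<omega>. \<omega> \<in> space M \<Longrightarrow> Q \<omega> \<in> prob_simplex"
  shows "integrable M Q"
  using integrable_continuous_comp_prob_simplex[OF assms continuous_on_id] by simp

lemma valfun_expectation_le:
  fixes Q :: "'a \<Rightarrow> real^'k::finite"
  assumes A: "compact A" "A \<noteq> {}"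
    and Q: "Q \<in> borel_measurable M" "\<And>\<omega>. \<omega> \<in> space M \<Longrightarrow> Q \<omega> \<in> prob_simplex"
  shows "valfun A (expectation Q) \<le> expectation (\<lambda>\<omega>. valfun A (Q \<omega>))"
proof -
  obtain a where a: "a \<in> optact A (expectation Q)" using optact_nonempty[OF A] by blast
  have "valfun A (expectation Q) = expectation (\<lambda>\<omega>. Q \<omega> \<bullet> a)"
    using valfun_eq_inner_if_optact[OF compact_imp_bounded[OF A(1)] a]
      integrable_prob_simplex_valued[OF Q] by simp
  also have "\<dots> \<le> expectation (\<lambda>\<omega>. valfun A (Q \<omega>))"
    using a integrable_prob_simplex_valued[OF Q] inner_le_valfun[OF compact_imp_bounded[OF A(1)]]
      integrable_continuous_comp_prob_simplex[OF Q continuous_on_valfun[OF compact_imp_bounded[OF A(1)] A(2)]]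
    by (intro integral_mono) (auto simp: optact_def)
  finally show ?thesis .
qed

lemma expectation_gap_le_if_affine_majorant:
  fixes Q :: "'a \<Rightarrow> real^'k::finite"
  assumes Q: "Q \<in> borel_measurable M" "\<And>\<omega>. \<omega> \<in> space M \<Longrightarrow> Q \<omega> \<in> prob_simplex"
    and mean: "expectation Q = p0"
    and f: "continuous_on UNIV f" and B: "continuous_on UNIV B"
    and major: "\<forall>p\<in>prob_simplex. f p \<le> f p0 + g \<bullet> (p - p0) + B p"
  shows "expectation (\<lambda>\<omega>. f (Q \<omega>)) - f p0 \<le> expectation (\<lambda>\<omega>. B (Q \<omega>))"
proof -
  note int_Q = integrable_prob_simplex_valued[OF Q]
  note int_B = integrable_continuous_comp_prob_simplex[OF Q B]
  have "f (Q \<omega>) \<le> (f p0 - g \<bullet> p0) + g \<bullet> Q \<omega> + B (Q \<omega>)" if "\<omega> \<in> space M" for \<omega>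
    using major[rule_format, OF Q(2)[OF that]] by (simp add: inner_diff_right)
  then have "expectation (\<lambda>\<omega>. f (Q \<omega>)) \<le> expectation (\<lambda>\<omega>. (f p0 - g \<bullet> p0) + g \<bullet> Q \<omega> + B (Q \<omega>))"
    using int_Q int_B integrable_continuous_comp_prob_simplex[OF Q f]
    by (intro integral_mono) auto
  also have "\<dots> = f p0 + expectation (\<lambda>\<omega>. B (Q \<omega>))"
    using int_Q int_B mean by (simp add: prob_space)
  finally show ?thesis by simp
qed

lemma VoI_le_expected_infdist_confset:
  fixes Q :: "'a \<Rightarrow> real^'k::finite"
  assumes A: "compact A" "A \<noteq> {}" and R: "\<forall>a\<in>A. norm a \<le> R" "0 < R"
    and Q: "Q \<in> borel_measurable M" "\<And>\<omega>. \<omega> \<in> space M \<Longrightarrow> Q \<omega> \<in> prob_simplex"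
    and mean: "expectation Q = p0" and p0: "p0 \<in> prob_simplex"
  shows "expectation (\<lambda>\<omega>. valfun A (Q \<omega>)) - valfun A p0
    \<le> 2 * R * expectation (\<lambda>\<omega>. infdist (Q \<omega>) (confset A p0))"
proof -
  obtain a where a: "a \<in> optact A p0" using optact_nonempty[OF A] by blast
  have cont: "continuous_on UNIV (\<lambda>p. 2 * R * infdist p (confset A p0))"
    by (intro continuous_intros)
  have major: "\<forall>p\<in>prob_simplex. valfun A p \<le> valfun A p0 + a \<bullet> (p - p0) + 2 * R * infdist p (confset A p0)"
  proof
    fix p
    show "valfun A p \<le> valfun A p0 + a \<bullet> (p - p0) + 2 * R * infdist p (confset A p0)"
      using valfun_minus_inner_le_infdist_confset[OF R a p0, of p]
        valfun_eq_inner_if_optact[OF compact_imp_bounded[OF A(1)] a]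
      by (simp add: inner_diff_right inner_commute)
  qed
  have "expectation (\<lambda>\<omega>. valfun A (Q \<omega>)) - valfun A p0
      \<le> expectation (\<lambda>\<omega>. 2 * R * infdist (Q \<omega>) (confset A p0))"
    by (rule expectation_gap_le_if_affine_majorant[OF Q mean
          continuous_on_valfun[OF compact_imp_bounded[OF A(1)] A(2)] cont major])
  then show ?thesis by (simp only: integral_mult_right_zero)
qed

lemma VoI_le_second_moment:
  fixes Q :: "'a \<Rightarrow> real^'k::finite"
  assumes A: "compact A" "A \<noteq> {}"
    and Q: "Q \<in> borel_measurable M" "\<And>\<omega>. \<omega> \<in> space M \<Longrightarrow> Q \<omega> \<in> prob_simplex"
    and mean: "expectation Q = p0"
    and second_order: "\<forall>p\<in>prob_simplex. valfun A p - valfun A p0 - g \<bullet> (p - p0) \<le> C * (norm (p - p0))\<^sup>2"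
  shows "expectation (\<lambda>\<omega>. valfun A (Q \<omega>)) - valfun A p0 \<le> C * expectation (\<lambda>\<omega>. (norm (Q \<omega> - p0))\<^sup>2)"
proof -
  have cont: "continuous_on UNIV (\<lambda>p. C * (norm (p - p0))\<^sup>2)"
    by (intro continuous_intros)
  have major: "\<forall>p\<in>prob_simplex. valfun A p \<le> valfun A p0 + g \<bullet> (p - p0) + C * (norm (p - p0))\<^sup>2"
    using second_order by (auto dest: bspec)
  have "expectation (\<lambda>\<omega>. valfun A (Q \<omega>)) - valfun A p0
      \<le> expectation (\<lambda>\<omega>. C * (norm (Q \<omega> - p0))\<^sup>2)"
    by (rule expectation_gap_le_if_affine_majorant[OF Q mean
          continuous_on_valfun[OF compact_imp_bounded[OF A(1)] A(2)] cont major])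
  then show ?thesis by (simp only: integral_mult_right_zero)
qed

end

lemma Limsup_ratio_eq_0_if_bounded_by_smallo:
  fixes V g :: "real \<Rightarrow> real"
  assumes bounds: "\<And>\<theta>. 0 < \<theta> \<Longrightarrow> 0 \<le> V \<theta> \<and> V \<theta> \<le> C * g \<theta>"
    and g: "g \<in> o[at_right 0](\<lambda>\<theta>. \<theta>)"
  shows "Limsup (at_right 0) (\<lambda>\<theta>. ereal (V \<theta> / \<theta>)) = 0"
proof -
  have pos: "\<forall>\<^sub>F \<theta> in at_right (0::real). 0 < \<theta>"
    by (simp add: eventually_at_right_less)
  have upper: "((\<lambda>\<theta>. C * (g \<theta> / \<theta>)) \<longlongrightarrow> 0) (at_right 0)"
    using tendsto_mult_right_zero[OF smalloD_tendsto[OF g]] by simp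
  have "\<forall>\<^sub>F \<theta> in at_right 0. 0 \<le> V \<theta> / \<theta>"
    using pos by eventually_elim (use bounds in simp)
  moreover have "\<forall>\<^sub>F \<theta> in at_right 0. V \<theta> / \<theta> \<le> C * (g \<theta> / \<theta>)"
    using pos by eventually_elim (use bounds in \<open>simp add: divide_right_mono\<close>)
  ultimately have "((\<lambda>\<theta>. V \<theta> / \<theta>) \<longlongrightarrow> 0) (at_right 0)"
    by (rule tendsto_sandwich[OF _ _ tendsto_const upper])
  then show ?thesis
    by (intro lim_imp_Limsup) (auto simp: zero_ereal_def dest: tendsto_ereal)
qed

theorem proposition5p1:
  fixes A :: "(real^'k::finite) set"
    and p0 :: "real^'k"
    and M :: "real \<Rightarrow> 'w measure"
    and q :: "real \<Rightarrow> 'w \<Rightarrow> real^'k"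
  assumes A_ne: "A \<noteq> {}" and A_compact: "compact A" and A_convex: "convex A"
    and p0_simplex: "p0 \<in> prob_simplex" and p0_full: "\<forall>k. 0 < p0 $ k"
    and prob: "\<And>\<theta>. \<theta> > 0 \<Longrightarrow> prob_space (M \<theta>)"
    and meas: "\<And>\<theta>. \<theta> > 0 \<Longrightarrow> q \<theta> \<in> borel_measurable (M \<theta>)"
    and vals: "\<And>\<theta> \<omega>. \<theta> > 0 \<Longrightarrow> \<omega> \<in> space (M \<theta>) \<Longrightarrow> q \<theta> \<omega> \<in> prob_simplex"
    and mean: "\<And>\<theta>. \<theta> > 0 \<Longrightarrow> (\<integral>\<omega>. q \<theta> \<omega> \<partial>M \<theta>) = p0"
    and cond: "(\<lambda>\<theta>. \<integral>\<omega>. infdist (q \<theta> \<omega>) (confset A p0) \<partial>M \<theta>) \<in> o[at_right 0](\<lambda>\<theta>. \<theta>)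
            \<or> (C2_hypersurface (frontier A) \<and> flexible A p0 \<and>
               (\<lambda>\<theta>. \<integral>\<omega>. (norm (q \<theta> \<omega> - p0))\<^sup>2 \<partial>M \<theta>) \<in> o[at_right 0](\<lambda>\<theta>. \<theta>))"
  shows "Limsup (at_right 0)
           (\<lambda>\<theta>. ereal (((\<integral>\<omega>. valfun A (q \<theta> \<omega>) \<partial>M \<theta>) - valfun A p0) / \<theta>)) = 0"
proof -
  obtain R where R: "\<forall>a\<in>A. norm a \<le> R" "0 < R"
    using compact_imp_bounded[OF A_compact] bounded_pos by blast
  define VoI where "VoI \<theta> = (\<integral>\<omega>. valfun A (q \<theta> \<omega>) \<partial>M \<theta>) - valfun A p0" for \<theta>
  have VoI_nonneg: "0 \<le> VoI \<theta>" if "0 < \<theta>" for \<theta>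
    using prob_space.valfun_expectation_le[OF prob[OF that] A_compact A_ne meas[OF that] vals[OF that]]
      mean[OF that]
    by (simp add: VoI_def)
  from cond show ?thesis
  proof (elim disjE conjE)
    assume small: "(\<lambda>\<theta>. \<integral>\<omega>. infdist (q \<theta> \<omega>) (confset A p0) \<partial>M \<theta>) \<in> o[at_right 0](\<lambda>\<theta>. \<theta>)"
    have "VoI \<theta> \<le> 2 * R * (\<integral>\<omega>. infdist (q \<theta> \<omega>) (confset A p0) \<partial>M \<theta>)" if "0 < \<theta>" for \<theta>
      using prob_space.VoI_le_expected_infdist_confset[OF prob[OF that] A_compact A_ne R meas[OF that]
          vals[OF that] mean[OF that] p0_simplex]
      by (simp add: VoI_def)
    then show ?thesis
      unfolding VoI_def[symmetric] using VoI_nonneg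
      by (intro Limsup_ratio_eq_0_if_bounded_by_smallo[OF _ small]) auto
  next
    assume flex: "flexible A p0"
      and small: "(\<lambda>\<theta>. \<integral>\<omega>. (norm (q \<theta> \<omega> - p0))\<^sup>2 \<partial>M \<theta>) \<in> o[at_right 0](\<lambda>\<theta>. \<theta>)"
    obtain g C where "\<forall>p\<in>prob_simplex. valfun A p - valfun A p0 - g \<bullet> (p - p0) \<le> C * (norm (p - p0))\<^sup>2"
      using flexible_imp_second_order_upper_bound[OF flex A_compact A_ne p0_simplex] .
    then have "VoI \<theta> \<le> C * (\<integral>\<omega>. (norm (q \<theta> \<omega> - p0))\<^sup>2 \<partial>M \<theta>)" if "0 < \<theta>" for \<theta>
      using prob_space.VoI_le_second_moment[OF prob[OF that] A_compact A_ne meas[OF that] vals[OF that]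
          mean[OF that]]
      by (simp add: VoI_def)
    then show ?thesis
      unfolding VoI_def[symmetric] using VoI_nonneg
      by (intro Limsup_ratio_eq_0_if_bounded_by_smallo[OF _ small]) auto
  qed
qed

end
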